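(* Consider the directed graph on a finite action space $X$ (with $|X|\ge2$) in which there is an edge $a\to b$ exactly when $a$ and $b$ differ in the action of a single player $i$, with resistance $R_{a\to b}=\max\{0,U_i(a)-U_i(b)\}$. Among all spanning trees rooted at any state of $X$, any tree of minimum total resistance contains an edge of resistance zero.
   Context: Finite game with players $\mathcal{D}$, finite action sets $X_i$, $X=\prod_iX_i$, and real utilities $U_i:X\to\mathbb{R}$. A spanning tree rooted at $c\in X$ is a set of edges of the graph such that every state other than $c$ has exactly one outgoing edge, $c$ has none, and from every state the edges lead to $c$. The total resistance of a tree is the sum of the resistances of its edges. *)

theory Defs
  imports Complex_Main "HOL-Library.FuncSet"
begin

text \<open>Players form a finite set D; player i has action set A i; a state (action
profile) is an element of the product X = PiE D A.\<close>

definition is_edge :: "'p set \<Rightarrow> ('p \<Rightarrow> 'a set) \<Rightarrow> ('p \<Rightarrow> 'a) \<Rightarrow> ('p \<Rightarrow> 'a) \<Rightarrow> bool" where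
  "is_edge D A a b \<longleftrightarrow> a \<in> PiE D A \<and> b \<in> PiE D A \<and>
     (\<exists>i\<in>D. a i \<noteq> b i \<and> (\<forall>j\<in>D. j \<noteq> i \<longrightarrow> a j = b j))"

definition dev_player :: "'p set \<Rightarrow> ('p \<Rightarrow> 'a) \<Rightarrow> ('p \<Rightarrow> 'a) \<Rightarrow> 'p" where
  "dev_player D a b = (THE i. i \<in> D \<and> a i \<noteq> b i)"

definition resistance :: "'p set \<Rightarrow> ('p \<Rightarrow> ('p \<Rightarrow> 'a) \<Rightarrow> real) \<Rightarrow> ('p \<Rightarrow> 'a) \<Rightarrow> ('p \<Rightarrow> 'a) \<Rightarrow> real" where
  "resistance D U a b = max 0 (U (dev_player D a b) a - U (dev_player D a b) b)"

definition spanning_tree :: "'p set \<Rightarrow> ('p \<Rightarrow> 'a set) \<Rightarrow> ('p \<Rightarrow> 'a) \<Rightarrow> (('p \<Rightarrow> 'a) \<times> ('p \<Rightarrow> 'a)) set \<Rightarrow> bool" where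
  "spanning_tree D A c T \<longleftrightarrow> c \<in> PiE D A \<and>
     (\<forall>(a,b)\<in>T. is_edge D A a b) \<and>
     (\<forall>a\<in>PiE D A - {c}. \<exists>!b. (a, b) \<in> T) \<and>
     (\<forall>b. (c, b) \<notin> T) \<and>
     (\<forall>a\<in>PiE D A. (a, c) \<in> T\<^sup>*)"

definition tree_resistance :: "'p set \<Rightarrow> ('p \<Rightarrow> ('p \<Rightarrow> 'a) \<Rightarrow> real) \<Rightarrow> (('p \<Rightarrow> 'a) \<times> ('p \<Rightarrow> 'a)) set \<Rightarrow> real" where
  "tree_resistance D U T = (\<Sum>(a,b)\<in>T. resistance D U a b)"

end

theory Submission
  imports Defs
begin

text \<open>Let T be a minimum-resistance tree with root c. Some edge a \<rightarrow> c enters the root.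
Reversing it yields a spanning tree rooted at a, whose resistance differs from that of T
by R(c \<rightarrow> a) - R(a \<rightarrow> c). Since R(a \<rightarrow> c) and R(c \<rightarrow> a) are the positive parts of opposite
numbers, one of them vanishes; if R(a \<rightarrow> c) were positive, the reversed tree would be
strictly cheaper, contradicting minimality.\<close>

lemma dev_player_commute: "dev_player D a b = dev_player D b a"
  unfolding dev_player_def by metis

lemma is_edge_sym: "is_edge D A a b \<Longrightarrow> is_edge D A b a"
  unfolding is_edge_def by metis

lemma resistance_nonneg: "resistance D U a b \<ge> 0"
  unfolding resistance_def by simp

lemma resistance_reverse_eq_0:
  assumes "resistance D U a b > 0"
  shows "resistance D U b a = 0"
  using assms unfolding resistance_def by (simp add: dev_player_commute[of D b a])

lemma rtrancl_Diff_edge: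
  assumes "(x, y) \<in> R\<^sup>*"
  shows "(x, y) \<in> (R - {(a, b)})\<^sup>* \<or> (x, a) \<in> (R - {(a, b)})\<^sup>*"
  using assms
proof (induction rule: rtrancl_induct)
  case base
  then show ?case by simp
next
  case (step y z)
  then show ?case
    by (cases "(y, z) = (a, b)") (auto intro: rtrancl_into_rtrancl)
qed

lemma spanning_tree_subset_states:
  "spanning_tree D A c T \<Longrightarrow> T \<subseteq> PiE D A \<times> PiE D A"
  unfolding spanning_tree_def is_edge_def by auto

lemma spanning_tree_finite:
  assumes "finite D" "\<forall>i\<in>D. finite (A i)" "spanning_tree D A c T"
  shows "finite T"
  using spanning_tree_subset_states[OF assms(3)] assms(1,2)
  by (meson finite_PiE finite_SigmaI rev_finite_subset)

lemma spanning_tree_edge_into_root: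
  assumes "spanning_tree D A c T" "x \<in> PiE D A" "x \<noteq> c"
  obtains a where "(a, c) \<in> T"
proof -
  have "(x, c) \<in> T\<^sup>+"
    using assms unfolding spanning_tree_def by (meson rtranclD)
  then show ?thesis
    using that by (meson tranclD2)
qed

lemma spanning_tree_reverse_root_edge:
  assumes st: "spanning_tree D A c T" and ac: "(a, c) \<in> T"
  shows "spanning_tree D A a (insert (c, a) (T - {(a, c)}))"
    (is "spanning_tree D A a ?T'")
proof -
  note tree = st[unfolded spanning_tree_def]
  have edge: "is_edge D A a c"
    using tree ac by blast
  then have aX: "a \<in> PiE D A" and a_ne_c: "a \<noteq> c"
    unfolding is_edge_def by auto
  have a_out: "(a, b) \<in> T \<Longrightarrow> b = c" for b
    using tree aX a_ne_c ac by blast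
  have reach: "(y, a) \<in> ?T'\<^sup>*" if "y \<in> PiE D A" for y
  proof -
    have mono: "(T - {(a, c)})\<^sup>* \<subseteq> ?T'\<^sup>*"
      by (intro rtrancl_mono) auto
    have "(y, c) \<in> T\<^sup>*"
      using tree that by blast
    from rtrancl_Diff_edge[OF this, of a c]
    show ?thesis
    proof
      assume "(y, c) \<in> (T - {(a, c)})\<^sup>*"
      with mono show ?thesis
        by (meson insertI1 rtrancl_into_rtrancl subsetD)
    qed (use mono in blast)
  qed
  show ?thesis
    unfolding spanning_tree_def
  proof (intro conjI ballI allI)
    fix y assume y: "y \<in> PiE D A - {a}"
    show "\<exists>!b. (y, b) \<in> ?T'"
    proof (cases "y = c")
      case True
      then show ?thesis using tree a_ne_c by auto
    next
      case False
      then show ?thesis using tree y by auto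
    qed
  qed (use tree is_edge_sym[OF edge] aX a_ne_c a_out reach in auto)
qed

lemma tree_resistance_reverse_edge:
  assumes "finite T" "(a, c) \<in> T" "(c, a) \<notin> T"
  shows "tree_resistance D U (insert (c, a) (T - {(a, c)}))
           = tree_resistance D U T - resistance D U a c + resistance D U c a"
  using assms unfolding tree_resistance_def by (simp add: sum_diff1)

theorem lemma9:
  fixes D :: "'p set" and A :: "'p \<Rightarrow> 'a set" and U :: "'p \<Rightarrow> ('p \<Rightarrow> 'a) \<Rightarrow> real"
    and c :: "'p \<Rightarrow> 'a" and T :: "(('p \<Rightarrow> 'a) \<times> ('p \<Rightarrow> 'a)) set"
  assumes "finite D"
    and "\<forall>i\<in>D. finite (A i)"
    and "card (PiE D A) \<ge> 2"
    and "spanning_tree D A c T"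
    and "\<forall>c' T'. spanning_tree D A c' T' \<longrightarrow> tree_resistance D U T \<le> tree_resistance D U T'"
  shows "\<exists>(a,b)\<in>T. resistance D U a b = 0"
proof -
  have "\<not> PiE D A \<subseteq> {c}"
    using assms(3) card_mono[of "{c}" "PiE D A"] by auto
  then obtain x where "x \<in> PiE D A" "x \<noteq> c"
    by blast
  then obtain a where ac: "(a, c) \<in> T"
    using spanning_tree_edge_into_root[OF assms(4)] by blast
  have ca: "(c, a) \<notin> T"
    using assms(4) unfolding spanning_tree_def by blast
  have "\<not> resistance D U a c > 0"
  proof
    assume pos: "resistance D U a c > 0"
    let ?T' = "insert (c, a) (T - {(a, c)})"
    have "tree_resistance D U ?T' < tree_resistance D U T"
      using tree_resistance_reverse_edge[OF spanning_tree_finite[OF assms(1,2,4)] ac ca]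
        resistance_reverse_eq_0[OF pos] pos by simp
    with assms(5) spanning_tree_reverse_root_edge[OF assms(4) ac] show False
      by fastforce
  qed
  with ac resistance_nonneg[of D U a c] show ?thesis
    by force
qed

end
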